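(* Let $n=2m+1$ with $m\ge1$, let $a,b,c,d\in\mathbb{C}$, and suppose $T_n$ (degree $n$) and $U_{n-2}$ (degree at most $n-2$) satisfy $T_n^2-HU_{n-2}^2=1$ with $$T_n(z)=1-\frac{2(z-d)\prod_{j=1}^{m}(z-x_j)^2}{(a-d)\prod_{j=1}^m(a-x_j)^2}=-1+\frac{2(z-a)(z-b)(z-c)\prod_{j=1}^{m-1}(z-y_j)^2}{(d-a)(d-b)(d-c)\prod_{j=1}^{m-1}(d-y_j)^2}$$ for some $x_1,\dots,x_m,y_1,\dots,y_{m-1}\in\mathbb{C}$. Put $s_k:=\tfrac12\bigl(a^k+b^k+c^k+d^k\bigr)$, $k=1,\dots,2m$, and form $F_k,\mathbf F,\mathbf F_i$ with $\nu=m+1$, $\mu=m-1$. Then $\det\mathbf F\neq0$ and $y_1,\dots,y_{m-1}$ (with multiplicity) are exactly the zeros of the polynomial $$y^{m-1}\det\mathbf F+y^{m-2}\det\mathbf F_1+\dots+y\det\mathbf F_{m-2}+\det\mathbf F_{m-1}.$$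
   Context: $H(z)=(z-a)(z-b)(z-c)(z-d)$. Given complex numbers $s_1,s_2,\dots$, set $F_0:=1$, $F_k:=0$ for $k<0$, and for $k\ge1$, $F_k:=\frac{(-1)^k}{k!}\det M_k$ where $M_k$ is the $k\times k$ matrix with entry $s_{i-j+1}$ for $j\le i$, entry $i$ at position $(i,i+1)$, and $0$ elsewhere. For integers $\nu\ge0,\mu\ge0$, $\mathbf F$ is the $\mu\times\mu$ matrix with $(i,j)$ entry $F_{\nu+i-j}$, and $\mathbf F_i$ ($1\le i\le\mu$) is $\mathbf F$ with its $i$-th column replaced by $(-F_{\nu+1},\dots,-F_{\nu+\mu})^T$. Convention: if $\mu=0$, $\det\mathbf F:=1$ (so for $m=1$ the polynomial is the nonzero constant $1$ and there are no $y_j$). The $x_j,y_j$ are the zeros of $U_{n-2}$, i.e. the extremal points of $T_n$ on $T_n^{-1}([-1,1])$. *)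

theory Defs
  imports "HOL-Computational_Algebra.Polynomial" "Jordan_Normal_Form.Determinant"
begin

definition psum :: "complex \<Rightarrow> complex \<Rightarrow> complex \<Rightarrow> complex \<Rightarrow> nat \<Rightarrow> complex" where
  "psum a b c d k = (a^k + b^k + c^k + d^k) / 2"

text \<open>The k x k matrix M_k (0-based indices; entry (i,j) corresponds to (i+1,j+1)):
  s_{i-j+1} for j <= i, i at position (i,i+1), 0 elsewhere.\<close>
definition Mk :: "(nat \<Rightarrow> complex) \<Rightarrow> nat \<Rightarrow> complex mat" where
  "Mk s k = mat k k (\<lambda>(i,j). if j \<le> i then s (i - j + 1)
                             else if j = i + 1 then of_nat (i + 1) else 0)"

definition Fk :: "(nat \<Rightarrow> complex) \<Rightarrow> int \<Rightarrow> complex" where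
  "Fk s k = (if k < 0 then 0 else if k = 0 then 1
             else (-1) ^ nat k / of_nat (fact (nat k)) * det (Mk s (nat k)))"

definition Fmat :: "(nat \<Rightarrow> complex) \<Rightarrow> nat \<Rightarrow> nat \<Rightarrow> complex mat" where
  "Fmat s \<nu> \<mu> = mat \<mu> \<mu> (\<lambda>(i,j). Fk s (int \<nu> + int i - int j))"

definition Fmat_col :: "(nat \<Rightarrow> complex) \<Rightarrow> nat \<Rightarrow> nat \<Rightarrow> nat \<Rightarrow> complex mat" where
  "Fmat_col s \<nu> \<mu> i = mat \<mu> \<mu> (\<lambda>(r,c). if c + 1 = i then - Fk s (int \<nu> + int r + 1)
                                         else Fk s (int \<nu> + int r - int c))"

definition Fpoly :: "(nat \<Rightarrow> complex) \<Rightarrow> nat \<Rightarrow> nat \<Rightarrow> complex poly" where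
  "Fpoly s \<nu> \<mu> = monom (det (Fmat s \<nu> \<mu>)) \<mu>
      + (\<Sum>i = 1..\<mu>. monom (det (Fmat_col s \<nu> \<mu> i)) (\<mu> - i))"

end

theory Submission
  imports Defs "HOL-Computational_Algebra.Polynomial_FPS"
begin

(*
  By Newton's identities the series G = \<Sum> F_k t^k satisfies G' = -(\<Sum> s_(k+1) t^k) G, so
  G^2 = (1 - at)(1 - bt)(1 - ct)(1 - dt) is the reflection of H. Reflecting the two
  factorisations of T gives h3 Q^2 - h1 P^2 = e t^n, where Q and P are the reflections of
  \<Prod>(z - y_j) and \<Prod>(z - x_j), h3 = (1 - at)(1 - bt)(1 - ct) and h1 = 1 - dt.
  As G Q + h1 P is a unit, t^n divides G Q - h1 P, so the coefficients of G Q at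
  t^(m+2), ..., t^(2m) vanish. This is the linear system with matrix Fmat for the
  coefficients of Q, and Cramer's rule turns the polynomial of the theorem into
  det Fmat * \<Prod>(y - y_j). The same identity shows, as in the uniqueness of Pade
  approximants, that the homogeneous system has only the trivial solution: det Fmat \<noteq> 0.
*)

no_notation vec_index (infixl \<open>$\<close> 100)
notation vec_index (infixl \<open>$v\<close> 100)
unbundle fps_syntax

section \<open>Newton's identities\<close>

(* M_k with its last row replaced by f_(k-1), ..., f_0. Expanding M_(k+1) along its last
   column produces such a matrix as a minor, so the recursion for det M_k lives in this family. *)
definition bordered_Mk :: "(nat \<Rightarrow> complex) \<Rightarrow> nat \<Rightarrow> (nat \<Rightarrow> complex) \<Rightarrow> complex mat" where
  "bordered_Mk s k f = mat k k (\<lambda>(i,j). if i = k - 1 then f (k - 1 - j) else Mk s k $$ (i,j))"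

lemma Mk_eq_bordered_Mk: "Mk s k = bordered_Mk s k (\<lambda>j. s (Suc j))"
  by (rule eq_matI) (auto simp: bordered_Mk_def Mk_def Suc_diff_le)

lemma det_bordered_Mk_Suc_Suc:
  "det (bordered_Mk s (Suc (Suc l)) f)
     = f 0 * det (Mk s (Suc l)) - of_nat (Suc l) * det (bordered_Mk s (Suc l) (\<lambda>i. f (Suc i)))"
proof -
  let ?A = "bordered_Mk s (Suc (Suc l)) f"
  have A: "?A \<in> carrier_mat (Suc (Suc l)) (Suc (Suc l))"
    by (simp add: bordered_Mk_def)
  have "det ?A = (\<Sum>i<Suc (Suc l). ?A $$ (i, Suc l) * cofactor ?A i (Suc l))"
    by (rule laplace_expansion_column[OF A]) simp
  also have "\<dots> = ?A $$ (l, Suc l) * cofactor ?A l (Suc l) + ?A $$ (Suc l, Suc l) * cofactor ?A (Suc l) (Suc l)"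
    by (simp add: sum.neutral bordered_Mk_def Mk_def)
  finally have "det ?A = ?A $$ (l, Suc l) * cofactor ?A l (Suc l) + ?A $$ (Suc l, Suc l) * cofactor ?A (Suc l) (Suc l)" .
  moreover have "mat_delete ?A l (Suc l) = bordered_Mk s (Suc l) (\<lambda>i. f (Suc i))"
    by (rule eq_matI) (auto simp: bordered_Mk_def Mk_def mat_delete_def Suc_diff_le)
  moreover have "mat_delete ?A (Suc l) (Suc l) = Mk s (Suc l)"
    by (rule eq_matI) (auto simp: bordered_Mk_def Mk_def mat_delete_def)
  ultimately show ?thesis
    by (simp add: cofactor_def bordered_Mk_def Mk_def)
qed

lemma det_Mk: "det (Mk s k) = (-1) ^ k * fact k * Fk s (int k)"
  by (cases "k = 0") (simp_all add: Fk_def Mk_def)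

lemma det_bordered_Mk:
  "det (bordered_Mk s (Suc k) f) = (-1) ^ k * fact k * (\<Sum>j\<le>k. f j * Fk s (int (k - j)))"
proof (induction k arbitrary: f)
  case 0
  have "bordered_Mk s 1 f \<in> carrier_mat 1 1"
    by (simp add: bordered_Mk_def)
  then show ?case
    by (simp add: det_single bordered_Mk_def Fk_def)
next
  case (Suc k)
  have "det (bordered_Mk s (Suc (Suc k)) f)
      = f 0 * ((-1) ^ Suc k * fact (Suc k) * Fk s (int (Suc k)))
        - of_nat (Suc k) * ((-1) ^ k * fact k * (\<Sum>j\<le>k. f (Suc j) * Fk s (int (k - j))))"
    by (simp only: det_bordered_Mk_Suc_Suc det_Mk Suc.IH)
  also have "\<dots> = (-1) ^ Suc k * fact (Suc k)
      * (f 0 * Fk s (int (Suc k)) + (\<Sum>j\<le>k. f (Suc j) * Fk s (int (k - j))))"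
    by (simp add: algebra_simps)
  also have "f 0 * Fk s (int (Suc k)) + (\<Sum>j\<le>k. f (Suc j) * Fk s (int (k - j)))
      = (\<Sum>j\<le>Suc k. f j * Fk s (int (Suc k - j)))"
    by (subst sum.atMost_Suc_shift) simp
  finally show ?case .
qed

lemma Fk_Suc:
  "of_nat (Suc k) * Fk s (int (Suc k)) = - (\<Sum>j\<le>k. s (Suc j) * Fk s (int (k - j)))"
proof -
  let ?S = "\<Sum>j\<le>k. s (Suc j) * Fk s (int (k - j))"
  have "Fk s (int (Suc k)) = (-1) ^ Suc k / fact (Suc k) * det (Mk s (Suc k))"
    unfolding Fk_def by (simp only: nat_int) (simp add: algebra_simps)
  also have "\<dots> = ((-1) ^ Suc k * (-1) ^ k) * (fact k / fact (Suc k)) * ?S"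
    by (simp only: Mk_eq_bordered_Mk det_bordered_Mk) (simp add: field_simps)
  also have "\<dots> = - ?S / of_nat (Suc k)"
    by (simp add: fact_Suc[of k] del: of_nat_Suc)
  finally show ?thesis
    by (simp add: field_simps del: of_nat_Suc)
qed

section \<open>The generating series of F_k\<close>

definition Fk_fps :: "(nat \<Rightarrow> complex) \<Rightarrow> complex fps" where
  "Fk_fps s = Abs_fps (\<lambda>k. Fk s (int k))"

lemma fps_deriv_Fk_fps: "fps_deriv (Fk_fps s) = - (Abs_fps (\<lambda>k. s (Suc k)) * Fk_fps s)"
proof (rule fps_ext)
  fix k
  have "fps_deriv (Fk_fps s) $ k = - (\<Sum>j\<le>k. s (Suc j) * Fk s (int (k - j)))"
    using Fk_Suc[of k s] by (simp add: Fk_fps_def del: of_nat_Suc)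
  then show "fps_deriv (Fk_fps s) $ k = (- (Abs_fps (\<lambda>k. s (Suc k)) * Fk_fps s)) $ k"
    by (simp add: fps_mult_nth Fk_fps_def atLeast0AtMost)
qed

lemma fps_linear_ode_unique:
  fixes F G K :: "'a::field_char_0 fps"
  assumes "fps_deriv F = K * F" and "fps_deriv G = K * G" and "F $ 0 = G $ 0"
  shows "F = G"
proof -
  have "\<forall>i\<le>k. F $ i = G $ i" for k
  proof (induction k)
    case 0
    then show ?case
      using assms(3) by simp
  next
    case (Suc k)
    have "(K * F) $ k = (K * G) $ k"
      unfolding fps_mult_nth using Suc.IH by (intro sum.cong) auto
    then have "of_nat (Suc k) * F $ Suc k = of_nat (Suc k) * G $ Suc k"
      using arg_cong[OF assms(1), of "\<lambda>f. f $ k"] arg_cong[OF assms(2), of "\<lambda>f. f $ k"] by simp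
    then have "F $ Suc k = G $ Suc k"
      by (simp del: of_nat_Suc)
    then show ?case
      using Suc.IH le_Suc_eq by auto
  qed
  then show ?thesis
    by (intro fps_ext) auto
qed

lemma geometric_fps_times_linear:
  "(1 - fps_const r * fps_X) * Abs_fps (\<lambda>k. r ^ Suc k) = fps_const (r :: 'a::comm_ring_1)"
proof (rule fps_ext)
  fix k
  show "((1 - fps_const r * fps_X) * Abs_fps (\<lambda>k. r ^ Suc k)) $ k = fps_const r $ k"
    by (cases k) (auto simp: algebra_simps)
qed

(* Both sides solve f' = -2 (\<Sum> s_(k+1) t^k) f with f(0) = 1. *)
lemma Fk_fps_psum_squared:
  "Fk_fps (psum a b c d) ^ 2 = fps_of_poly ([:1, -a:] * [:1, -b:] * [:1, -c:] * [:1, -d:])"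
proof -
  define L where "L r = 1 - fps_const r * fps_X" for r :: complex
  define Geo where "Geo r = Abs_fps (\<lambda>k. r ^ Suc k)" for r :: complex
  let ?G = "Fk_fps (psum a b c d)"
  let ?K = "- (2 * Abs_fps (\<lambda>k. psum a b c d (Suc k)))"
  have psum_fps: "?K = - (Geo a + Geo b + Geo c + Geo d)"
  proof (rule fps_ext)
    fix k
    have "2 * psum a b c d (Suc k) = a ^ Suc k + b ^ Suc k + c ^ Suc k + d ^ Suc k"
      by (simp add: psum_def)
    then show "?K $ k = (- (Geo a + Geo b + Geo c + Geo d)) $ k"
      by (simp add: Geo_def numeral_fps_const)
  qed
  have "fps_deriv (L a * L b * L c * L d)
      = - ((L a * Geo a) * L b * L c * L d + (L b * Geo b) * L a * L c * L d
           + (L c * Geo c) * L a * L b * L d + (L d * Geo d) * L a * L b * L c)"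
    unfolding L_def Geo_def geometric_fps_times_linear by (simp add: algebra_simps)
  also have "\<dots> = ?K * (L a * L b * L c * L d)"
    unfolding psum_fps by (simp add: algebra_simps)
  finally have deriv_L: "fps_deriv (L a * L b * L c * L d) = ?K * (L a * L b * L c * L d)" .
  have deriv_G: "fps_deriv (?G ^ 2) = ?K * ?G ^ 2"
    by (simp add: fps_deriv_Fk_fps power2_eq_square algebra_simps)
  have "(?G ^ 2) $ 0 = 1"
    by (simp add: Fk_fps_def Fk_def power2_eq_square)
  moreover have "(L a * L b * L c * L d) $ 0 = 1"
    by (simp add: L_def)
  ultimately have "?G ^ 2 = L a * L b * L c * L d"
    by (intro fps_linear_ode_unique[OF deriv_G deriv_L]) simp
  also have "\<dots> = fps_of_poly ([:1, -a:] * [:1, -b:] * [:1, -c:] * [:1, -d:])"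
    by (simp only: L_def fps_of_poly_mult fps_of_poly_linear' fps_const_neg) simp
  finally show ?thesis .
qed

section \<open>Reflecting the factorisations of T\<close>

lemma reflect_poly_linear: "reflect_poly [:- r, 1:] = [:1, - r :: 'a::idom:]"
  by (simp add: reflect_poly_def)

lemma reflect_poly_linear_factors:
  "reflect_poly (\<Prod>j\<in>A. [:- y j, 1:]) = (\<Prod>j\<in>A. [:1, - y j:] :: 'a::idom poly)"
  by (simp add: reflect_poly_prod reflect_poly_linear)

lemma degree_linear_factors:
  assumes "finite A"
  shows "degree (\<Prod>j\<in>A. [:- y j, 1:] :: 'a::idom poly) = card A"
  using assms by (simp add: degree_prod_eq_sum_degree)

lemma poly_linear_factors: "poly (\<Prod>j\<in>A. [:- y j, 1:]) z = (\<Prod>j\<in>A. z - y j :: 'a::idom)"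
  by (simp add: poly_prod)

lemma order_linear_factors:
  assumes "finite A"
  shows "order z (\<Prod>j\<in>A. [:- y j, 1:] :: 'a::idom poly) = card {j \<in> A. y j = z}"
proof -
  have linear: "order z [:- y j, 1:] = (if y j = z then 1 else 0)" for j
    using order_power_n_n[of z 1] by (auto intro: order_0I)
  have "order z (\<Prod>j\<in>A. [:- y j, 1:]) = (\<Sum>j\<in>A. if y j = z then 1 else 0)"
    using assms
  proof (induction A rule: finite_induct)
    case (insert i A)
    have "(\<Prod>j\<in>A. [:- y j, 1:]) \<noteq> 0"
      using insert.hyps(1) by (simp add: prod_zero_iff)
    then have "[:- y i, 1:] * (\<Prod>j\<in>A. [:- y j, 1:]) \<noteq> 0"
      by (intro no_zero_divisors) simp_all
    then have "order z (\<Prod>j\<in>insert i A. [:- y j, 1:])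
        = order z [:- y i, 1:] + order z (\<Prod>j\<in>A. [:- y j, 1:])"
      unfolding prod.insert[OF insert.hyps] by (rule order_mult)
    then show ?case
      using insert by (simp add: linear)
  qed simp
  also have "\<dots> = card {j \<in> A. y j = z}"
    using assms by (simp add: sum.If_cases Int_def conj_commute)
  finally show ?thesis .
qed

lemma reflect_poly_diff_const:
  fixes p q :: "'a::comm_ring poly"
  assumes "degree p = n" and "degree q = n" and "p - q = [:e:]"
  shows "reflect_poly p - reflect_poly q = monom e n"
proof (rule poly_eqI)
  fix k
  have "coeff p i - coeff q i = (if i = 0 then e else 0)" for i
    using arg_cong[OF assms(3), of "\<lambda>r. coeff r i"] by (cases i) auto
  then show "coeff (reflect_poly p - reflect_poly q) k = coeff (monom e n) k"
    using assms(1,2) by (cases "n < k") (simp_all add: coeff_reflect_poly)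
qed

lemma monic_affine_pair_diff_const:
  fixes p q T :: "'a::field_char_0 poly"
  assumes T_p: "T = 1 - smult \<alpha> p" and T_q: "T = -1 + smult \<beta> q" and "degree T > 0"
    and monic: "lead_coeff p = 1" "lead_coeff q = 1"
  shows "degree p = degree T" and "degree q = degree T" and "\<beta> \<noteq> 0" and "q - p = [:2 / \<beta>:]"
proof -
  have "\<alpha> \<noteq> 0" and \<beta>: "\<beta> \<noteq> 0"
    using T_p T_q \<open>degree T > 0\<close> by auto
  from \<beta> show "\<beta> \<noteq> 0" .
  have p_T: "smult \<alpha> p = 1 - T" and q_T: "smult \<beta> q = T + 1"
    using T_p T_q by simp_all
  have "degree (T - 1) = degree T" and "degree (T + 1) = degree T"
    using degree_add_eq_left[of "-1" T] degree_add_eq_left[of 1 T] \<open>degree T > 0\<close> by simp_all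
  then show degrees: "degree p = degree T" "degree q = degree T"
    using arg_cong[OF p_T, of degree] arg_cong[OF q_T, of degree] degree_minus[of "T - 1"]
      \<open>\<alpha> \<noteq> 0\<close> \<open>\<beta> \<noteq> 0\<close> by simp_all
  have sum: "smult \<alpha> p + smult \<beta> q = [:2:]"
    unfolding p_T q_T by (simp add: numeral_poly)
  have "\<alpha> + \<beta> = 0"
    using arg_cong[OF sum, of "\<lambda>r. coeff r (degree T)"] degrees monic \<open>degree T > 0\<close>
    by (simp add: coeff_pCons split: nat.split)
  then have "q - p = smult (inverse \<beta>) (smult \<alpha> p + smult \<beta> q)"
    using \<open>\<beta> \<noteq> 0\<close> by (simp add: eq_neg_iff_add_eq_0[symmetric] smult_add_right smult_diff_right)
  also have "\<dots> = [:2 / \<beta>:]"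
    by (simp add: sum divide_inverse mult.commute)
  finally show "q - p = [:2 / \<beta>:]" .
qed

lemma reflected_factorisation_identity:
  fixes m :: nat and T :: "complex poly" and a b c d :: complex and x y :: "nat \<Rightarrow> complex"
  defines "n \<equiv> 2 * m + 1"
  assumes "m \<ge> 1" and "degree T = n"
    and T_x: "\<forall>z. poly T z = 1 - 2 * (z - d) * (\<Prod>j = 1..m. (z - x j) ^ 2)
                          / ((a - d) * (\<Prod>j = 1..m. (a - x j) ^ 2))"
    and T_y: "\<forall>z. poly T z = -1 + 2 * (z - a) * (z - b) * (z - c) * (\<Prod>j = 1..m-1. (z - y j) ^ 2)
                          / ((d - a) * (d - b) * (d - c) * (\<Prod>j = 1..m-1. (d - y j) ^ 2))"
  obtains e where "e \<noteq> 0"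
    and "[:1, -a:] * [:1, -b:] * [:1, -c:] * (\<Prod>j = 1..m-1. [:1, - y j:]) ^ 2
         - [:1, -d:] * (\<Prod>j = 1..m. [:1, - x j:]) ^ 2 = monom e n"
proof -
  define p_x where "p_x = [:- d, 1:] * (\<Prod>j = 1..m. [:- x j, 1:]) ^ 2"
  define p_y where "p_y = [:- a, 1:] * [:- b, 1:] * [:- c, 1:] * (\<Prod>j = 1..m-1. [:- y j, 1:]) ^ 2"
  define \<alpha> where "\<alpha> = 2 / ((a - d) * (\<Prod>j = 1..m. (a - x j) ^ 2))"
  define \<beta> where "\<beta> = 2 / ((d - a) * (d - b) * (d - c) * (\<Prod>j = 1..m-1. (d - y j) ^ 2))"
  have T_p_x: "T = 1 - smult \<alpha> p_x"
  proof (rule poly_ext)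
    fix z
    have "poly p_x z = (z - d) * (\<Prod>j = 1..m. z - x j) ^ 2"
      by (simp add: p_x_def poly_linear_factors algebra_simps)
    then show "poly T z = poly (1 - smult \<alpha> p_x) z"
      by (simp add: T_x \<alpha>_def prod_power_distrib)
  qed
  have T_p_y: "T = -1 + smult \<beta> p_y"
  proof (rule poly_ext)
    fix z
    have "poly p_y z = (z - a) * (z - b) * (z - c) * (\<Prod>j = 1..m-1. z - y j) ^ 2"
      by (simp add: p_y_def poly_linear_factors algebra_simps)
    then show "poly T z = poly (-1 + smult \<beta> p_y) z"
      by (simp add: T_y \<beta>_def prod_power_distrib)
  qed
  have monic: "lead_coeff p_x = 1" "lead_coeff p_y = 1"
    unfolding p_x_def p_y_def lead_coeff_mult lead_coeff_power lead_coeff_prod by simp_all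
  have "degree T > 0"
    using \<open>degree T = n\<close> by (simp add: n_def)
  note pair = monic_affine_pair_diff_const[OF T_p_x T_p_y this monic]
  have "reflect_poly p_y - reflect_poly p_x = monom (2 / \<beta>) n"
    using reflect_poly_diff_const[OF pair(2,1,4)] \<open>degree T = n\<close> by simp
  moreover have "reflect_poly p_y = [:1, -a:] * [:1, -b:] * [:1, -c:] * (\<Prod>j = 1..m-1. [:1, - y j:]) ^ 2"
    by (simp only: p_y_def reflect_poly_mult reflect_poly_power reflect_poly_linear reflect_poly_linear_factors)
  moreover have "reflect_poly p_x = [:1, -d:] * (\<Prod>j = 1..m. [:1, - x j:]) ^ 2"
    by (simp only: p_x_def reflect_poly_mult reflect_poly_power reflect_poly_linear reflect_poly_linear_factors)
  moreover have "2 / \<beta> \<noteq> 0"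
    using pair(3) by simp
  ultimately show thesis
    using that by metis
qed

lemma degree_reflected_linear_factors:
  assumes "finite A"
  shows "degree (\<Prod>j\<in>A. [:1, - y j:] :: 'a::idom poly) \<le> card A"
  using degree_reflect_poly_le[of "\<Prod>j\<in>A. [:- y j, 1:]"] assms
  by (simp add: reflect_poly_linear_factors degree_linear_factors)

section \<open>Pade approximation of the square root\<close>

lemma fps_X_power_dvd_iff: "fps_X ^ n dvd f \<longleftrightarrow> (\<forall>k<n. f $ k = 0)"
  for f :: "'a::comm_ring_1 fps"
proof
  assume "fps_X ^ n dvd f"
  then obtain g where "f = fps_X ^ n * g"
    by (elim dvdE)
  then show "\<forall>k<n. f $ k = 0"
    by (simp add: fps_X_power_mult_nth)
next
  assume "\<forall>k<n. f $ k = 0"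
  then have "f = fps_X ^ n * fps_shift n f"
    by (intro fps_ext) (simp add: fps_X_power_mult_nth)
  then show "fps_X ^ n dvd f"
    by (metis dvd_triv_left)
qed

lemma poly_eq_monom_if_fps_X_power_dvd:
  fixes p :: "'a::comm_ring_1 poly"
  assumes "fps_X ^ n dvd fps_of_poly p" and "degree p \<le> n"
  shows "p = monom (coeff p n) n"
proof (rule poly_eqI)
  fix k
  show "coeff p k = coeff (monom (coeff p n) n) k"
    using assms coeff_eq_0[of p k] unfolding fps_X_power_dvd_iff
    by (cases k n rule: linorder_cases) simp_all
qed

lemma poly_eq_0_if_fps_X_power_dvd:
  fixes p :: "'a::comm_ring_1 poly"
  assumes "fps_X ^ n dvd fps_of_poly p" and "degree p < n"
  shows "p = 0"
  using poly_eq_monom_if_fps_X_power_dvd[of n p] assms by (simp add: coeff_eq_0)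

lemma degree_mult_le_add: "degree p \<le> i \<Longrightarrow> degree q \<le> j \<Longrightarrow> degree (p * q) \<le> i + j"
  by (rule order.trans[OF degree_mult_le]) simp

locale Pade_approximant =
  fixes G :: "complex fps" and h1 h3 P Q :: "complex poly" and e :: complex and m :: nat
  assumes G_square: "G ^ 2 = fps_of_poly (h3 * h1)"
    and G_0: "G $ 0 = 1" and Q_0: "coeff Q 0 = 1" and h1_P_0: "coeff (h1 * P) 0 = 1"
    and identity: "h3 * Q ^ 2 - h1 * P ^ 2 = monom e (2 * m + 1)" and e_nonzero: "e \<noteq> 0"
    and m_pos: "m \<ge> 1" and degree_h3: "degree h3 \<le> 3" and degree_h1: "degree h1 \<le> 1"
    and degree_Q: "degree Q \<le> m - 1" and degree_P: "degree P \<le> m"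
begin

lemma approximation_congruence: "fps_X ^ (2 * m + 1) dvd fps_of_poly Q * G - fps_of_poly (h1 * P)"
proof -
  let ?X = "fps_of_poly Q * G" and ?Y = "fps_of_poly (h1 * P)"
  have "(?X - ?Y) * (?X + ?Y) = fps_of_poly (h1 * (h3 * Q ^ 2 - h1 * P ^ 2))"
    using G_square by (simp add: fps_of_poly_mult fps_of_poly_diff fps_of_poly_power algebra_simps power2_eq_square)
  also have "\<dots> = fps_X ^ (2 * m + 1) * (fps_const e * fps_of_poly h1)"
    by (simp add: identity fps_of_poly_mult fps_of_poly_monom mult_ac)
  finally have "fps_X ^ (2 * m + 1) dvd (?X - ?Y) * (?X + ?Y)"
    by (metis dvd_triv_left)
  moreover have "is_unit (?X + ?Y)"
    using G_0 Q_0 h1_P_0 by simp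
  ultimately show ?thesis
    by (simp add: dvd_mult_unit_iff)
qed

(* Coefficient indices are written (m + 1) + 1 + r to match row r of Fmat s (m + 1) (m - 1). *)
lemma coeff_Q_times_G_vanish: "\<forall>r<m - 1. (fps_of_poly Q * G) $ (m + 1 + 1 + r) = 0"
proof (intro allI impI)
  fix r
  assume "r < m - 1"
  then have "(fps_of_poly Q * G - fps_of_poly (h1 * P)) $ (m + 1 + 1 + r) = 0"
    using approximation_congruence unfolding fps_X_power_dvd_iff by simp
  moreover have "coeff (h1 * P) (m + 1 + 1 + r) = 0"
    using degree_mult_le_add[OF degree_h1 degree_P] by (intro coeff_eq_0) simp
  ultimately show "(fps_of_poly Q * G) $ (m + 1 + 1 + r) = 0"
    by simp
qed

lemma approximant_cross_identity:
  assumes degree_W: "degree W \<le> m - 1"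
    and vanish: "\<forall>r<m - 1. (fps_of_poly W * G) $ (m + 1 + 1 + r) = 0"
  defines "A \<equiv> truncate_fps (m + 2) (fps_of_poly W * G)"
  shows "W * (h1 * P) = Q * A"
proof -
  let ?n = "2 * m + 1"
  have "(fps_of_poly W * G) $ k = 0" if "m + 2 \<le> k" and "k < ?n" for k
  proof -
    have "k - (m + 2) < m - 1" and "m + 1 + 1 + (k - (m + 2)) = k"
      using that by linarith+
    then show ?thesis
      using vanish by metis
  qed
  then have "fps_X ^ ?n dvd fps_of_poly W * G - fps_of_poly A"
    unfolding fps_X_power_dvd_iff by (auto simp: A_def)
  with approximation_congruence have "fps_X ^ ?n dvd
      fps_of_poly Q * (fps_of_poly W * G - fps_of_poly A) - fps_of_poly W * (fps_of_poly Q * G - fps_of_poly (h1 * P))"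
    by (blast intro: dvd_diff dvd_mult)
  then have "fps_X ^ ?n dvd fps_of_poly (W * (h1 * P) - Q * A)"
    by (simp add: fps_of_poly_mult fps_of_poly_diff algebra_simps)
  moreover have "degree (W * (h1 * P) - Q * A) < ?n"
  proof (rule degree_diff_less)
    show "degree (W * (h1 * P)) < ?n"
      using degree_mult_le_add[OF degree_W degree_mult_le_add[OF degree_h1 degree_P]] m_pos by linarith
    have "degree A \<le> m + 1"
      using degree_truncate_fps[of "m + 2"] by (simp add: A_def less_Suc_eq_le)
    then show "degree (Q * A) < ?n"
      using degree_mult_le_add[OF degree_Q] m_pos by fastforce
  qed
  ultimately show ?thesis
    using poly_eq_0_if_fps_X_power_dvd by fastforce
qed

(* Multiplying the cross identity by P and using h1 P^2 = h3 Q^2 - e t^n gives Q Z = e t^n W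
   with degree Z \<le> n. As Q is a unit power series, Z = z t^n, and the coefficients of t^n
   give z = e W(0) = 0. *)
lemma approximant_unique:
  assumes degree_W: "degree W \<le> m - 1" and W_0: "coeff W 0 = 0"
    and vanish: "\<forall>r<m - 1. (fps_of_poly W * G) $ (m + 1 + 1 + r) = 0"
  shows "W = 0"
proof -
  let ?n = "2 * m + 1"
  define A where "A = truncate_fps (m + 2) (fps_of_poly W * G)"
  have degree_A: "degree A \<le> m + 1"
    using degree_truncate_fps[of "m + 2"] by (simp add: A_def less_Suc_eq_le)
  define Z where "Z = W * h3 * Q - A * P"
  have QZ: "Q * Z = W * monom e ?n"
  proof -
    have "Q * Z = W * (h3 * Q ^ 2) - (Q * A) * P"
      by (simp add: Z_def algebra_simps power2_eq_square)
    also have "\<dots> = W * (h3 * Q ^ 2 - h1 * P ^ 2)"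
      unfolding approximant_cross_identity[OF degree_W vanish, folded A_def, symmetric]
      by (simp add: algebra_simps power2_eq_square)
    finally show ?thesis
      by (simp add: identity)
  qed
  have "fps_of_poly Q * fps_of_poly Z = fps_X ^ ?n * (fps_const e * fps_of_poly W)"
    by (simp only: fps_of_poly_mult[symmetric] QZ) (simp add: fps_of_poly_mult fps_of_poly_monom mult_ac)
  then have "fps_X ^ ?n dvd fps_of_poly Q * fps_of_poly Z"
    by (metis dvd_triv_left)
  then have "fps_X ^ ?n dvd fps_of_poly Z"
    using Q_0 by (simp add: dvd_mult_unit_iff')
  moreover have "degree Z \<le> ?n"
    unfolding Z_def
  proof (rule degree_diff_le)
    show "degree (W * h3 * Q) \<le> ?n"
      using degree_mult_le_add[OF degree_mult_le_add[OF degree_W degree_h3] degree_Q] m_pos by linarith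
    show "degree (A * P) \<le> ?n"
      using degree_mult_le_add[OF degree_A degree_P] by linarith
  qed
  ultimately obtain z where "Z = monom z ?n"
    by (blast dest: poly_eq_monom_if_fps_X_power_dvd)
  with QZ have "monom z ?n * Q = monom e ?n * W"
    by (simp add: mult.commute)
  moreover from arg_cong[OF this, of "\<lambda>p. coeff p ?n"] have "z = 0"
    using Q_0 W_0 by (simp add: coeff_monom_mult)
  ultimately show "W = 0"
    using e_nonzero by simp
qed

end

lemma Pade_approximant_psum:
  fixes m :: nat and T :: "complex poly" and a b c d :: complex and x y :: "nat \<Rightarrow> complex"
  assumes "m \<ge> 1" and "degree T = 2 * m + 1"
    and "\<forall>z. poly T z = 1 - 2 * (z - d) * (\<Prod>j = 1..m. (z - x j) ^ 2)
                          / ((a - d) * (\<Prod>j = 1..m. (a - x j) ^ 2))"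
    and "\<forall>z. poly T z = -1 + 2 * (z - a) * (z - b) * (z - c) * (\<Prod>j = 1..m-1. (z - y j) ^ 2)
                          / ((d - a) * (d - b) * (d - c) * (\<Prod>j = 1..m-1. (d - y j) ^ 2))"
  obtains e where "Pade_approximant (Fk_fps (psum a b c d)) [:1, -d:] ([:1, -a:] * [:1, -b:] * [:1, -c:])
      (\<Prod>j = 1..m. [:1, - x j:]) (\<Prod>j = 1..m-1. [:1, - y j:]) e m"
proof -
  obtain e where "e \<noteq> 0" and identity: "[:1, -a:] * [:1, -b:] * [:1, -c:] * (\<Prod>j = 1..m-1. [:1, - y j:]) ^ 2
      - [:1, -d:] * (\<Prod>j = 1..m. [:1, - x j:]) ^ 2 = monom e (2 * m + 1)"
    using reflected_factorisation_identity[OF assms] .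
  have "Pade_approximant (Fk_fps (psum a b c d)) [:1, -d:] ([:1, -a:] * [:1, -b:] * [:1, -c:])
      (\<Prod>j = 1..m. [:1, - x j:]) (\<Prod>j = 1..m-1. [:1, - y j:]) e m"
  proof
    show "Fk_fps (psum a b c d) ^ 2 = fps_of_poly ([:1, -a:] * [:1, -b:] * [:1, -c:] * [:1, -d:])"
      by (rule Fk_fps_psum_squared)
    show "Fk_fps (psum a b c d) $ 0 = 1"
      by (simp add: Fk_fps_def Fk_def)
    show "coeff (\<Prod>j = 1..m-1. [:1, - y j:]) 0 = 1" "coeff ([:1, -d:] * (\<Prod>j = 1..m. [:1, - x j:])) 0 = 1"
      by (simp_all add: poly_0_coeff_0[symmetric] poly_prod)
    show "degree ([:1, -a:] * [:1, -b:] * [:1, -c:]) \<le> 3"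
      using degree_mult_le_add[OF degree_mult_le_add, of "[:1, -a:]" 1 "[:1, -b:]" 1 "[:1, -c:]" 1]
      by simp
    show "degree [:1, -d:] \<le> 1"
      by simp
    show "degree (\<Prod>j = 1..m-1. [:1, - y j:]) \<le> m - 1" "degree (\<Prod>j = 1..m. [:1, - x j:]) \<le> m"
      using degree_reflected_linear_factors[of "{1..m-1}" y] degree_reflected_linear_factors[of "{1..m}" x]
      by simp_all
  qed (fact identity \<open>e \<noteq> 0\<close> \<open>m \<ge> 1\<close>)+
  then show thesis
    by (rule that)
qed

section \<open>The linear system\<close>

definition vec_poly :: "complex vec \<Rightarrow> complex poly" where
  "vec_poly v = pCons 0 (Poly (list_of_vec v))"

lemma coeff_vec_poly:
  "coeff (vec_poly v) k = (if 1 \<le> k \<and> k \<le> dim_vec v then v $v (k - 1) else 0)"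
  by (cases k) (auto simp: vec_poly_def nth_default_def)

lemma degree_vec_poly: "degree (vec_poly v) \<le> dim_vec v"
  by (rule degree_le) (simp add: coeff_vec_poly)

lemma Fmat_mult_vec:
  assumes "dim_vec v = \<mu>" and "r < \<mu>"
  shows "(Fmat s \<nu> \<mu> *\<^sub>v v) $v r = (fps_of_poly (vec_poly v) * Fk_fps s) $ (\<nu> + 1 + r)"
proof -
  define N where "N = \<nu> + 1 + r"
  define g where "g i = coeff (vec_poly v) i * Fk s (int N - int i)" for i
  have "(fps_of_poly (vec_poly v) * Fk_fps s) $ N = (\<Sum>i = 0..N. g i)"
    unfolding fps_mult_nth by (intro sum.cong) (simp_all add: Fk_fps_def g_def of_nat_diff)
  also have "\<dots> = (\<Sum>i<Suc \<mu>. g i)"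
  proof -
    have "(\<Sum>i = 0..N. g i) = (\<Sum>i = 0..N + \<mu>. g i)"
      by (rule sum.mono_neutral_left) (auto simp: g_def Fk_def)
    also have "\<dots> = (\<Sum>i<Suc \<mu>. g i)"
      using assms by (intro sum.mono_neutral_right) (auto simp: g_def coeff_vec_poly)
    finally show ?thesis .
  qed
  also have "\<dots> = g 0 + (\<Sum>c<\<mu>. g (Suc c))"
    by (rule sum.lessThan_Suc_shift)
  also have "\<dots> = (\<Sum>c<\<mu>. Fk s (int \<nu> + int r - int c) * v $v c)"
    using assms by (simp add: g_def coeff_vec_poly N_def algebra_simps)
  also have "\<dots> = (Fmat s \<nu> \<mu> *\<^sub>v v) $v r"
    using assms by (simp add: Fmat_def scalar_prod_def atLeast0LessThan)
  finally show ?thesis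
    by (simp add: N_def)
qed

lemma det_Fmat_nonzero:
  assumes "\<And>W. degree W \<le> \<mu> \<Longrightarrow> coeff W 0 = 0
      \<Longrightarrow> \<forall>r<\<mu>. (fps_of_poly W * Fk_fps s) $ (\<nu> + 1 + r) = 0 \<Longrightarrow> W = 0"
  shows "det (Fmat s \<nu> \<mu>) \<noteq> 0"
proof
  assume "det (Fmat s \<nu> \<mu>) = 0"
  then obtain v where v: "v \<in> carrier_vec \<mu>" "v \<noteq> 0\<^sub>v \<mu>" "Fmat s \<nu> \<mu> *\<^sub>v v = 0\<^sub>v \<mu>"
    using det_0_iff_vec_prod_zero_field[of "Fmat s \<nu> \<mu>" \<mu>] by (auto simp: Fmat_def)
  have "vec_poly v = 0"
  proof (rule assms)
    show "degree (vec_poly v) \<le> \<mu>"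
      using degree_vec_poly[of v] v(1) by simp
    show "coeff (vec_poly v) 0 = 0"
      by (simp add: coeff_vec_poly)
    show "\<forall>r<\<mu>. (fps_of_poly (vec_poly v) * Fk_fps s) $ (\<nu> + 1 + r) = 0"
    proof (intro allI impI)
      fix r
      assume "r < \<mu>"
      then have "(fps_of_poly (vec_poly v) * Fk_fps s) $ (\<nu> + 1 + r) = (Fmat s \<nu> \<mu> *\<^sub>v v) $v r"
        using Fmat_mult_vec[of v \<mu> r s \<nu>] v(1) by simp
      also have "\<dots> = 0"
        using v(3) \<open>r < \<mu>\<close> by simp
      finally show "(fps_of_poly (vec_poly v) * Fk_fps s) $ (\<nu> + 1 + r) = 0" .
    qed
  qed
  have "v $v c = coeff (vec_poly v) (Suc c)" if "c < \<mu>" for c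
    using v(1) that by (simp add: coeff_vec_poly)
  then have "v $v c = 0" if "c < \<mu>" for c
    using \<open>vec_poly v = 0\<close> that by simp
  then show False
    using v(1,2) by (auto intro: eq_vecI)
qed

lemma det_Fmat_col:
  assumes Q_0: "coeff Q 0 = 1" and degree_Q: "degree Q \<le> \<mu>"
    and vanish: "\<forall>r<\<mu>. (fps_of_poly Q * Fk_fps s) $ (\<nu> + 1 + r) = 0"
    and i: "1 \<le> i" "i \<le> \<mu>"
  shows "det (Fmat_col s \<nu> \<mu> i) = coeff Q i * det (Fmat s \<nu> \<mu>)"
proof -
  define q where "q = vec \<mu> (\<lambda>c. coeff Q (Suc c))"
  have dim_q: "dim_vec q = \<mu>"
    by (simp add: q_def)
  have Q: "Q = 1 + vec_poly q"
    using Q_0 degree_Q by (intro poly_eqI) (auto simp: coeff_vec_poly q_def coeff_eq_0 coeff_1 split: nat.split)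
  have "Fmat s \<nu> \<mu> *\<^sub>v q = vec \<mu> (\<lambda>r. - Fk s (int \<nu> + int r + 1))"
  proof (rule eq_vecI)
    fix r
    assume "r < dim_vec (vec \<mu> (\<lambda>r. - Fk s (int \<nu> + int r + 1)))"
    then have "r < \<mu>" by simp
    then have "(Fmat s \<nu> \<mu> *\<^sub>v q) $v r = (fps_of_poly Q * Fk_fps s - Fk_fps s) $ (\<nu> + 1 + r)"
      using Fmat_mult_vec[OF dim_q \<open>r < \<mu>\<close>] by (simp add: Q fps_of_poly_add algebra_simps)
    also have "\<dots> = - Fk s (int (\<nu> + 1 + r))"
      using vanish \<open>r < \<mu>\<close> by (simp add: Fk_fps_def del: add_Suc_right add_Suc)
    also have "\<dots> = - Fk s (int \<nu> + int r + 1)"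
      by (simp add: add_ac)
    finally show "(Fmat s \<nu> \<mu> *\<^sub>v q) $v r = vec \<mu> (\<lambda>r. - Fk s (int \<nu> + int r + 1)) $v r"
      using \<open>r < \<mu>\<close> by simp
  qed (simp add: Fmat_def)
  then have "Fmat_col s \<nu> \<mu> i = replace_col (Fmat s \<nu> \<mu>) (Fmat s \<nu> \<mu> *\<^sub>v q) (i - 1)"
    using i by (intro eq_matI) (auto simp: replace_col_def Fmat_def Fmat_col_def)
  also have "det \<dots> = q $v (i - 1) * det (Fmat s \<nu> \<mu>)"
    using i by (intro cramer_lemma_mat) (auto simp: Fmat_def q_def)
  finally show ?thesis
    using i by (simp add: q_def)
qed

lemma Fpoly_eq_smult:
  assumes degree_p: "degree p = \<mu>" and monic: "lead_coeff p = 1"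
    and vanish: "\<forall>r<\<mu>. (fps_of_poly (reflect_poly p) * Fk_fps s) $ (\<nu> + 1 + r) = 0"
  shows "Fpoly s \<nu> \<mu> = smult (det (Fmat s \<nu> \<mu>)) p"
proof -
  let ?Q = "reflect_poly p" and ?D = "det (Fmat s \<nu> \<mu>)"
  have Q_0: "coeff ?Q 0 = 1" and degree_Q: "degree ?Q \<le> \<mu>"
    using monic degree_reflect_poly_le[of p] degree_p by simp_all
  have "Fpoly s \<nu> \<mu> = monom (?D * coeff ?Q 0) (\<mu> - 0) + (\<Sum>i = 1..\<mu>. monom (?D * coeff ?Q i) (\<mu> - i))"
    unfolding Fpoly_def using det_Fmat_col[OF Q_0 degree_Q vanish] Q_0 by (simp add: mult.commute)
  also have "\<dots> = (\<Sum>i\<le>\<mu>. monom (?D * coeff ?Q i) (\<mu> - i))"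
    by (simp add: atMost_atLeast0 sum.atLeast_Suc_atMost)
  also have "\<dots> = [:?D:] * (\<Sum>i\<le>\<mu>. monom (coeff p (\<mu> - i)) (\<mu> - i))"
    using degree_p by (simp add: sum_distrib_left smult_monom coeff_reflect_poly)
  also have "(\<Sum>i\<le>\<mu>. monom (coeff p (\<mu> - i)) (\<mu> - i)) = (\<Sum>i\<le>\<mu>. monom (coeff p i) i)"
    by (rule sum.atLeastAtMost_rev[of _ 0 \<mu>, unfolded atMost_atLeast0[symmetric], symmetric, simplified])
  also have "\<dots> = p"
    using degree_p poly_as_sum_of_monoms[of p] by simp
  finally show ?thesis
    by simp
qed

theorem theorem1:
  fixes m n :: nat and a b c d :: complex and T U :: "complex poly"
    and x y :: "nat \<Rightarrow> complex"
  assumes "m \<ge> 1" and "n = 2 * m + 1"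
    and "degree T = n" and "degree U \<le> n - 2"
    and "T ^ 2 - [:-a, 1:] * [:-b, 1:] * [:-c, 1:] * [:-d, 1:] * U ^ 2 = 1"
    and "\<forall>z. poly T z = 1 - 2 * (z - d) * (\<Prod>j = 1..m. (z - x j) ^ 2)
                          / ((a - d) * (\<Prod>j = 1..m. (a - x j) ^ 2))"
    and "\<forall>z. poly T z = -1 + 2 * (z - a) * (z - b) * (z - c) * (\<Prod>j = 1..m-1. (z - y j) ^ 2)
                          / ((d - a) * (d - b) * (d - c) * (\<Prod>j = 1..m-1. (d - y j) ^ 2))"
  shows "det (Fmat (psum a b c d) (m + 1) (m - 1)) \<noteq> 0
         \<and> (\<forall>z. order z (Fpoly (psum a b c d) (m + 1) (m - 1))
                 = card {j \<in> {1..m-1}. y j = z})"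
proof -
  \<comment> \<open>The Pell equation and the bound on degree U are unused: they follow from the factorisations of T.\<close>
  let ?s = "psum a b c d"
  define p where "p = (\<Prod>j = 1..m-1. [:- y j, 1:])"
  obtain e where "Pade_approximant (Fk_fps ?s) [:1, -d:] ([:1, -a:] * [:1, -b:] * [:1, -c:])
      (\<Prod>j = 1..m. [:1, - x j:]) (\<Prod>j = 1..m-1. [:1, - y j:]) e m"
    using Pade_approximant_psum[OF assms(1) _ assms(6,7)] assms(2,3) by blast
  then interpret Pade_approximant "Fk_fps ?s" "[:1, -d:]" "[:1, -a:] * [:1, -b:] * [:1, -c:]"
      "\<Prod>j = 1..m. [:1, - x j:]" "\<Prod>j = 1..m-1. [:1, - y j:]" e m .
  have "det (Fmat ?s (m + 1) (m - 1)) \<noteq> 0"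
    by (rule det_Fmat_nonzero) (fact approximant_unique)
  moreover have "Fpoly ?s (m + 1) (m - 1) = smult (det (Fmat ?s (m + 1) (m - 1))) p"
  proof (rule Fpoly_eq_smult)
    show "degree p = m - 1" and "lead_coeff p = 1"
      unfolding p_def lead_coeff_prod by (simp_all add: degree_linear_factors)
    show "\<forall>r<m - 1. (fps_of_poly (reflect_poly p) * Fk_fps ?s) $ (m + 1 + 1 + r) = 0"
      using coeff_Q_times_G_vanish by (simp only: p_def reflect_poly_linear_factors)
  qed
  ultimately show ?thesis
    by (simp only: order_smult p_def order_linear_factors finite_atLeastAtMost simp_thms)
qed

end
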